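(* Let $0\to N\xrightarrow{i} G\to Q\to 1$ be a short exact sequence of groups with $N$ abelian (written additively), and let $Z^1(G,N)$ be the abelian group of crossed homomorphisms $\phi:G\to N$ (i.e. $\phi(x+y)=\phi(x)+x\cdot\phi(y)$). For $\phi,\psi\in Z^1(G,N)$ define $(\phi\diamond\psi)(x):=\phi(i(\psi(x)))$. Then $\phi\diamond\psi\in Z^1(G,N)$.
   Context: $G$ acts on $N$ by conjugation, $x\cdot n=x+n-x$. $Z^1(G,N)$ is an abelian group under pointwise addition. *)

theory Defs
  imports "HOL-Algebra.Algebra"
begin

text \<open>Groups are written multiplicatively (HOL-Algebra); the paper writes them additively.
  The action of G on N is conjugation inside G, transported back along the embedding i.\<close>

definition conj_act :: "('g,'a) monoid_scheme \<Rightarrow> ('n,'b) monoid_scheme \<Rightarrow> ('n \<Rightarrow> 'g) \<Rightarrow> 'g \<Rightarrow> 'n \<Rightarrow> 'n" where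
  "conj_act G N i x n = inv_into (carrier N) i (x \<otimes>\<^bsub>G\<^esub> i n \<otimes>\<^bsub>G\<^esub> inv\<^bsub>G\<^esub> x)"

definition crossed_hom :: "('g,'a) monoid_scheme \<Rightarrow> ('n,'b) monoid_scheme \<Rightarrow> ('n \<Rightarrow> 'g) \<Rightarrow> ('g \<Rightarrow> 'n) \<Rightarrow> bool" where
  "crossed_hom G N i \<phi> \<longleftrightarrow> \<phi> \<in> carrier G \<rightarrow> carrier N \<and>
     (\<forall>x\<in>carrier G. \<forall>y\<in>carrier G.
        \<phi> (x \<otimes>\<^bsub>G\<^esub> y) = \<phi> x \<otimes>\<^bsub>N\<^esub> conj_act G N i x (\<phi> y))"

end

theory Submission
  imports Defs
begin

text \<open>Since N is abelian, conjugation by an element of i(N) acts trivially on N, so a crossed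
  homomorphism restricted to i(N) is an ordinary homomorphism N \<rightarrow> N; it is moreover
  G-equivariant, because \<phi>(x n x\<inverse>) = \<phi> x + x\<cdot>\<phi> n + x\<cdot>\<phi>(x\<inverse>) and the outer terms cancel.
  The cocycle identity for \<psi>, followed by these two properties of \<phi>, gives the cocycle
  identity for \<phi> \<diamond> \<psi>.\<close>

locale normal_abelian_embedding = G: group G + N: comm_group N
  for G :: "('g,'a) monoid_scheme" and N :: "('n,'b) monoid_scheme" +
  fixes i :: "'n \<Rightarrow> 'g"
  assumes embedding_hom: "i \<in> hom N G"
    and embedding_inj: "inj_on i (carrier N)"
    and embedding_normal: "i ` carrier N \<lhd> G"
begin

sublocale i: group_hom N G i
  by (simp add: group_hom_def group_hom_axioms_def embedding_hom G.group_axioms N.group_axioms)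

abbreviation act :: "'g \<Rightarrow> 'n \<Rightarrow> 'n" where
  "act \<equiv> conj_act G N i"

lemma embedding_eqD: "a \<in> carrier N \<Longrightarrow> b \<in> carrier N \<Longrightarrow> i a = i b \<Longrightarrow> a = b"
  using embedding_inj by (auto simp: inj_on_def)

lemma conj_act_closed_and_image:
  assumes "x \<in> carrier G" "n \<in> carrier N"
  shows conj_act_closed: "act x n \<in> carrier N"
    and embedding_conj_act: "i (act x n) = x \<otimes>\<^bsub>G\<^esub> i n \<otimes>\<^bsub>G\<^esub> inv\<^bsub>G\<^esub> x"
proof -
  have "x \<otimes>\<^bsub>G\<^esub> i n \<otimes>\<^bsub>G\<^esub> inv\<^bsub>G\<^esub> x \<in> i ` carrier N"
    using embedding_normal assms by (simp add: G.normal_inv_iff)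
  then show "act x n \<in> carrier N" "i (act x n) = x \<otimes>\<^bsub>G\<^esub> i n \<otimes>\<^bsub>G\<^esub> inv\<^bsub>G\<^esub> x"
    by (auto simp: conj_act_def inv_into_into f_inv_into_f)
qed

lemma conj_act_embedded:
  assumes "m \<in> carrier N" "n \<in> carrier N"
  shows "act (i m) n = n"
proof (rule embedding_eqD)
  have "i m \<otimes>\<^bsub>G\<^esub> i n = i n \<otimes>\<^bsub>G\<^esub> i m"
    using assms by (metis N.m_comm i.hom_mult)
  then have "i (act (i m) n) = i n \<otimes>\<^bsub>G\<^esub> i m \<otimes>\<^bsub>G\<^esub> inv\<^bsub>G\<^esub> (i m)"
    using assms by (simp add: embedding_conj_act)
  also have "\<dots> = i n"
    using assms by (simp add: G.m_assoc)
  finally show "i (act (i m) n) = i n" .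
qed (use assms conj_act_closed in auto)

lemma conj_act_one: "n \<in> carrier N \<Longrightarrow> act \<one>\<^bsub>G\<^esub> n = n"
  using conj_act_embedded[of "\<one>\<^bsub>N\<^esub>" n] by simp

lemma conj_act_mult:
  assumes "x \<in> carrier G" "a \<in> carrier N" "b \<in> carrier N"
  shows "act x (a \<otimes>\<^bsub>N\<^esub> b) = act x a \<otimes>\<^bsub>N\<^esub> act x b"
proof (rule embedding_eqD)
  have "i (act x a \<otimes>\<^bsub>N\<^esub> act x b)
      = (x \<otimes>\<^bsub>G\<^esub> i a \<otimes>\<^bsub>G\<^esub> inv\<^bsub>G\<^esub> x) \<otimes>\<^bsub>G\<^esub> (x \<otimes>\<^bsub>G\<^esub> i b \<otimes>\<^bsub>G\<^esub> inv\<^bsub>G\<^esub> x)"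
    using assms by (simp add: conj_act_closed embedding_conj_act)
  also have "\<dots> = x \<otimes>\<^bsub>G\<^esub> i a \<otimes>\<^bsub>G\<^esub> (inv\<^bsub>G\<^esub> x \<otimes>\<^bsub>G\<^esub> x) \<otimes>\<^bsub>G\<^esub> i b \<otimes>\<^bsub>G\<^esub> inv\<^bsub>G\<^esub> x"
    using assms by (simp only: G.m_assoc G.m_closed G.inv_closed i.hom_closed)
  also have "\<dots> = x \<otimes>\<^bsub>G\<^esub> (i a \<otimes>\<^bsub>G\<^esub> i b) \<otimes>\<^bsub>G\<^esub> inv\<^bsub>G\<^esub> x"
    using assms by (simp add: G.m_assoc)
  also have "\<dots> = i (act x (a \<otimes>\<^bsub>N\<^esub> b))"
    using assms by (simp add: embedding_conj_act)
  finally show "i (act x (a \<otimes>\<^bsub>N\<^esub> b)) = i (act x a \<otimes>\<^bsub>N\<^esub> act x b)" ..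
qed (use assms conj_act_closed in auto)

context
  fixes \<phi> :: "'g \<Rightarrow> 'n"
  assumes crossed: "crossed_hom G N i \<phi>"
begin

lemma crossed_hom_closed: "x \<in> carrier G \<Longrightarrow> \<phi> x \<in> carrier N"
  using crossed by (auto simp: crossed_hom_def)

lemma crossed_hom_mult:
  "x \<in> carrier G \<Longrightarrow> y \<in> carrier G \<Longrightarrow> \<phi> (x \<otimes>\<^bsub>G\<^esub> y) = \<phi> x \<otimes>\<^bsub>N\<^esub> act x (\<phi> y)"
  using crossed by (auto simp: crossed_hom_def)

lemma crossed_hom_one: "\<phi> \<one>\<^bsub>G\<^esub> = \<one>\<^bsub>N\<^esub>"
proof -
  have "\<phi> \<one>\<^bsub>G\<^esub> \<otimes>\<^bsub>N\<^esub> \<phi> \<one>\<^bsub>G\<^esub> = \<phi> \<one>\<^bsub>G\<^esub> \<otimes>\<^bsub>N\<^esub> \<one>\<^bsub>N\<^esub>"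
    using crossed_hom_mult[of "\<one>\<^bsub>G\<^esub>" "\<one>\<^bsub>G\<^esub>"] by (simp add: conj_act_one crossed_hom_closed)
  then show ?thesis
    by (metis G.one_closed N.l_cancel N.one_closed crossed_hom_closed)
qed

lemma crossed_hom_mult_inv:
  "x \<in> carrier G \<Longrightarrow> \<phi> x \<otimes>\<^bsub>N\<^esub> act x (\<phi> (inv\<^bsub>G\<^esub> x)) = \<one>\<^bsub>N\<^esub>"
  using crossed_hom_mult[of x "inv\<^bsub>G\<^esub> x"] by (simp add: crossed_hom_one)

lemma crossed_hom_embedding_mult:
  assumes "a \<in> carrier N" "b \<in> carrier N"
  shows "\<phi> (i (a \<otimes>\<^bsub>N\<^esub> b)) = \<phi> (i a) \<otimes>\<^bsub>N\<^esub> \<phi> (i b)"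
  using assms crossed_hom_mult[of "i a" "i b"]
  by (simp add: conj_act_embedded crossed_hom_closed)

lemma crossed_hom_embedding_equivariant:
  assumes "x \<in> carrier G" "n \<in> carrier N"
  shows "\<phi> (i (act x n)) = act x (\<phi> (i n))"
proof -
  have "\<phi> (i (act x n)) = \<phi> (x \<otimes>\<^bsub>G\<^esub> (i n \<otimes>\<^bsub>G\<^esub> inv\<^bsub>G\<^esub> x))"
    using assms by (simp add: embedding_conj_act G.m_assoc)
  also have "\<dots> = \<phi> x \<otimes>\<^bsub>N\<^esub> act x (\<phi> (i n) \<otimes>\<^bsub>N\<^esub> act (i n) (\<phi> (inv\<^bsub>G\<^esub> x)))"
    using assms by (simp add: crossed_hom_mult)
  also have "\<dots> = \<phi> x \<otimes>\<^bsub>N\<^esub> (act x (\<phi> (i n)) \<otimes>\<^bsub>N\<^esub> act x (\<phi> (inv\<^bsub>G\<^esub> x)))"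
    using assms by (simp add: conj_act_embedded conj_act_mult crossed_hom_closed)
  also have "\<dots> = act x (\<phi> (i n)) \<otimes>\<^bsub>N\<^esub> (\<phi> x \<otimes>\<^bsub>N\<^esub> act x (\<phi> (inv\<^bsub>G\<^esub> x)))"
    using assms by (simp add: N.m_lcomm conj_act_closed crossed_hom_closed)
  also have "\<dots> = act x (\<phi> (i n))"
    using assms by (simp add: crossed_hom_mult_inv conj_act_closed crossed_hom_closed)
  finally show ?thesis .
qed

end

lemma crossed_hom_compose_embedding:
  assumes \<phi>: "crossed_hom G N i \<phi>" and \<psi>: "crossed_hom G N i \<psi>"
  shows "crossed_hom G N i (\<lambda>x. \<phi> (i (\<psi> x)))"
  unfolding crossed_hom_def
proof (intro conjI ballI)
  show "(\<lambda>x. \<phi> (i (\<psi> x))) \<in> carrier G \<rightarrow> carrier N"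
    using crossed_hom_closed[OF \<phi>] crossed_hom_closed[OF \<psi>] by auto
  fix x y assume x: "x \<in> carrier G" and y: "y \<in> carrier G"
  have "\<phi> (i (\<psi> (x \<otimes>\<^bsub>G\<^esub> y))) = \<phi> (i (\<psi> x \<otimes>\<^bsub>N\<^esub> act x (\<psi> y)))"
    using crossed_hom_mult[OF \<psi> x y] by simp
  also have "\<dots> = \<phi> (i (\<psi> x)) \<otimes>\<^bsub>N\<^esub> \<phi> (i (act x (\<psi> y)))"
    using x y crossed_hom_closed[OF \<psi>]
    by (intro crossed_hom_embedding_mult[OF \<phi>]) (simp_all add: conj_act_closed)
  also have "\<dots> = \<phi> (i (\<psi> x)) \<otimes>\<^bsub>N\<^esub> act x (\<phi> (i (\<psi> y)))"
    using x y crossed_hom_closed[OF \<psi>] by (simp add: crossed_hom_embedding_equivariant[OF \<phi>])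
  finally show "\<phi> (i (\<psi> (x \<otimes>\<^bsub>G\<^esub> y))) = \<phi> (i (\<psi> x)) \<otimes>\<^bsub>N\<^esub> act x (\<phi> (i (\<psi> y)))" .
qed

end

theorem lemma6:
  fixes G :: "('g,'a) monoid_scheme" and N :: "('n,'b) monoid_scheme" and Q :: "('q,'c) monoid_scheme"
    and i :: "'n \<Rightarrow> 'g" and p :: "'g \<Rightarrow> 'q" and \<phi> \<psi> :: "'g \<Rightarrow> 'n"
  assumes "group G" and "comm_group N" and "group Q"
    and "i \<in> hom N G" and "inj_on i (carrier N)"
    and "p \<in> hom G Q" and "p ` carrier G = carrier Q"
    and "kernel G Q p = i ` carrier N"
    and "crossed_hom G N i \<phi>" and "crossed_hom G N i \<psi>"
  shows "crossed_hom G N i (\<lambda>x. \<phi> (i (\<psi> x)))"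
proof -
  interpret p: group_hom G Q p
    using assms by (simp add: group_hom_def group_hom_axioms_def)
  have "i ` carrier N \<lhd> G"
    using p.normal_kernel assms(8) by simp
  then interpret normal_abelian_embedding G N i
    using assms by (simp add: normal_abelian_embedding_def normal_abelian_embedding_axioms_def)
  show ?thesis
    using crossed_hom_compose_embedding assms by blast
qed

end
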